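(* Let $g$ be a superfunction which is $n$ times continuously differentiable in an open neighbourhood of the unit sphere $\mathbb{S}^{m-1}\subset\mathbb{R}^m$, and let $h\in C^n((0,\infty))$. Then \[ \int_{SS}h(R^2)\,g=h(1)\int_{SS}g . \]
   Context: Fix integers $m\ge1$, $n\ge0$. Let $\Lambda_{2n}$ be the complex Grassmann algebra generated by anticommuting variables ${x\grave{}}_1,\dots,{x\grave{}}_{2n}$; superfunctions are functions $f=\sum_A {x\grave{}}_Af_A$ on open subsets of $\mathbb{R}^m$ with $\mathbb{C}$-valued coefficients $f_A$ (regularity is meant coefficientwise), ${x\grave{}}_A$ running over the monomials of $\Lambda_{2n}$. Bosonic coordinates $\underline{x}=(x_1,\dots,x_m)$, $r^2=\sum x_i^2$. Fermionic derivatives $\partial_{{x\grave{}}_j}$ satisfy $\partial_{{x\grave{}}_j}({x\grave{}}_k g)=\delta_{jk}g-{x\grave{}}_k\partial_{{x\grave{}}_j}g$ and commute with the $x_i$. Put $\underline{x}\grave{}^2=\sum_{j=1}^n{x\grave{}}_{2j-1}{x\grave{}}_{2j}$, $R^2=r^2-\underline{x}\grave{}^2$, and for $h\in C^n((0,\infty))$, $h(R^2)=\sum_{j=0}^n(-1)^j\frac{\underline{x}\grave{}^{2j}}{j!}h^{(j)}(r^2)$. The Berezin integral is $\int_B=\pi^{-n}\partial_{{x\grave{}}_{2n}}\cdots\partial_{{x\grave{}}_1}$. Using spherical coordinates $\underline{x}=r\underline{\xi}$, $\underline\xi\in\mathbb{S}^{m-1}$, with surface measure $d\underline\xi$ and $\frac{\partial}{\partial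 r^2}=\frac{1}{2r}\frac{\partial}{\partial r}$, the supersphere integral of a superfunction $f$ that is $n$ times continuously differentiable near $\mathbb{S}^{m-1}$ is \[ \int_{SS}f=\sum_{j=0}^n\int_{\mathbb{S}^{m-1}}d\underline{\xi}\int_B\frac{\underline{x}\grave{}^{2j}}{j!}\Big[\Big(\frac{\partial}{\partial r^2}\Big)^jr^{m-2}f\Big]_{r=1}. \] *)

theory Defs
  imports "HOL-Analysis.Analysis"
begin

text \<open>An element of the complex Grassmann algebra is represented by its coefficient
  family: a ::= sum over finite A of a(A) x_A, where x_A is the ordered monomial
  x_{a1} ... x_{ak} with a1 < ... < ak. Generators are indexed 1..2n; only coefficients
  of subsets of {1..2n} are ever read by the operations below.\<close>

type_synonym grass = "nat set \<Rightarrow> complex"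

text \<open>Sign of reordering x_A x_B into x_{A \<union> B} (A, B disjoint).\<close>
definition gsign :: "nat set \<Rightarrow> nat set \<Rightarrow> complex" where
  "gsign A B = (-1) ^ card ((A \<times> B) \<inter> {(p, q). q < p})"

definition gmul :: "grass \<Rightarrow> grass \<Rightarrow> grass" where
  "gmul a b = (\<lambda>C. \<Sum>A\<in>Pow C. gsign A (C - A) * a A * b (C - A))"

definition gone :: grass where
  "gone = (\<lambda>A. if A = {} then 1 else 0)"

definition gen :: "nat \<Rightarrow> grass" where
  "gen k = (\<lambda>A. if A = {k} then 1 else 0)"

primrec gpow :: "grass \<Rightarrow> nat \<Rightarrow> grass" where
  "gpow a 0 = gone"
| "gpow a (Suc k) = gmul a (gpow a k)"

definition gsq :: "nat \<Rightarrow> grass" where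
  "gsq n = (\<lambda>A. \<Sum>j=1..n. gmul (gen (2*j - 1)) (gen (2*j)) A)"

text \<open>Fermionic derivative: d_j (x_j x_A) = x_A for j \<notin> A, with the sign of
  moving x_j to the front of the ordered monomial x_{A \<union> {j}}.\<close>
definition fder :: "nat \<Rightarrow> grass \<Rightarrow> grass" where
  "fder j a = (\<lambda>A. if j \<in> A then 0
                   else (-1) ^ card {k \<in> A. k < j} * a (insert j A))"

primrec fders :: "nat \<Rightarrow> grass \<Rightarrow> grass" where
  "fders 0 a = a"
| "fders (Suc k) a = fder (Suc k) (fders k a)"

text \<open>Berezin integral pi^{-n} d_{2n} ... d_1 (the result is a scalar, i.e. the
  coefficient of the empty monomial).\<close>
definition berezin :: "nat \<Rightarrow> grass \<Rightarrow> complex" where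
  "berezin n a = inverse (of_real (pi ^ n)) * fders (2*n) a {}"

fun Ck_on :: "nat \<Rightarrow> ('a::euclidean_space) set \<Rightarrow> ('a \<Rightarrow> 'b::real_normed_vector) \<Rightarrow> bool" where
  "Ck_on 0 U f = continuous_on U f"
| "Ck_on (Suc k) U f = (f differentiable_on U \<and>
      (\<forall>i\<in>Basis. Ck_on k U (\<lambda>x. frechet_derivative f (at x) i)))"

definition Cn_real :: "nat \<Rightarrow> real set \<Rightarrow> (real \<Rightarrow> real) \<Rightarrow> bool" where
  "Cn_real n S h \<longleftrightarrow> (\<forall>j<n. \<forall>t\<in>S. (deriv ^^ j) h differentiable (at t))
                     \<and> continuous_on S ((deriv ^^ n) h)"

text \<open>A superfunction f = sum_A x_A f_A is represented as f x A = f_A(x).\<close>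

definition hR2 :: "nat \<Rightarrow> (real \<Rightarrow> real) \<Rightarrow> real^'m \<Rightarrow> grass" where
  "hR2 n h x = (\<lambda>A. \<Sum>j\<le>n. of_real ((-1) ^ j / fact j * (deriv ^^ j) h ((norm x)\<^sup>2))
                              * gpow (gsq n) j A)"

text \<open>d/d(r^2) = 1/(2r) d/dr on functions of r.\<close>
definition Dr2 :: "(real \<Rightarrow> complex) \<Rightarrow> real \<Rightarrow> complex" where
  "Dr2 \<phi> = (\<lambda>r. (1 / (2 * r)) *\<^sub>R vector_derivative \<phi> (at r))"

text \<open>Integral over the unit sphere S^{m-1} w.r.t. surface measure, via
  int_{S^{m-1}} phi d xi = m * int_{B(0,1)} phi(x/|x|) dx.\<close>
definition sphere_int :: "(real^'m \<Rightarrow> complex) \<Rightarrow> complex" where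
  "sphere_int \<phi> = of_nat CARD('m) * integral (ball 0 1) (\<lambda>x. \<phi> (x /\<^sub>R norm x))"

definition ssint :: "nat \<Rightarrow> (real^'m \<Rightarrow> grass) \<Rightarrow> complex" where
  "ssint n f = (\<Sum>j\<le>n. sphere_int (\<lambda>(\<xi>::real^'m).
       berezin n (gmul (\<lambda>A. gpow (gsq n) j A / of_nat (fact j))
         (\<lambda>A. (Dr2 ^^ j) (\<lambda>r. of_real (r powr (real CARD('m) - 2)) * f (r *\<^sub>R \<xi>) A) 1))))"

end

theory Submission
  imports Defs
begin

text \<open>Along a ray, the derivative \<open>\<partial>/\<partial>(r\<^sup>2)\<close> of a product \<open>c(r\<^sup>2) \<Phi>(r \<xi>)\<close> obeys the
  Leibniz rule. Since \<open>h(R\<^sup>2) = \<Sum>\<^sub>i (-x`\<^sup>2)\<^sup>i / i! h\<^sup>(\<^sup>i\<^sup>)(r\<^sup>2)\<close>, the \<open>j\<close>-th such derivative of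
  \<open>r\<^sup>m\<^sup>-\<^sup>2 h(R\<^sup>2) g\<close> at \<open>r = 1\<close> is
  \<open>\<Sum>\<^sub>i\<^sub>,\<^sub>k (j choose k) (-x`\<^sup>2)\<^sup>i / i! h\<^sup>(\<^sup>k\<^sup>+\<^sup>i\<^sup>)(1) (\<partial>/\<partial>(r\<^sup>2))\<^sup>j\<^sup>-\<^sup>k (r\<^sup>m\<^sup>-\<^sup>2 g)\<close>.
  Hence the supersphere integral of \<open>h(R\<^sup>2) g\<close> is a combination of the moments
  \<open>\<integral>\<^bsub>S\<^esub> \<integral>\<^bsub>B\<^esub> x`\<^sup>2\<^sup>N (\<partial>/\<partial>(r\<^sup>2))\<^sup>l (r\<^sup>m\<^sup>-\<^sup>2 g)\<close>, and the coefficient of the moment with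
  \<open>N = l + p\<close> is \<open>h\<^sup>(\<^sup>p\<^sup>)(1) / l!\<close> times \<open>\<Sum>\<^sub>i\<^sub>+\<^sub>k\<^sub>=\<^sub>p (-1)\<^sup>i / (i! k!)\<close>, which vanishes unless
  \<open>p = 0\<close>. What survives is \<open>h(1)\<close> times the same expansion of the supersphere integral
  of \<open>g\<close>.\<close>

section \<open>Functions of class \<open>C\<^sup>k\<close>\<close>

lemma Ck_on_cong:
  fixes f g :: "'a::euclidean_space \<Rightarrow> 'b::real_normed_vector"
  assumes "open U" "\<And>x. x \<in> U \<Longrightarrow> f x = g x" "Ck_on k U f"
  shows "Ck_on k U g"
  using assms
proof (induction k arbitrary: f g)
  case 0
  then show ?case using continuous_on_cong by force
next
  case (Suc k)
  have d: "f differentiable at x" if "x \<in> U" for x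
    using Suc.prems that by (simp add: differentiable_on_eq_differentiable_at)
  have fd: "frechet_derivative f (at x) = frechet_derivative g (at x)" if "x \<in> U" for x
    by (rule frechet_derivative_transform_within_open[OF d[OF that] Suc.prems(1) that Suc.prems(2)])
  have "g differentiable at x" if "x \<in> U" for x
    using d[OF that] Suc.prems(1,2) that
    by (meson differentiable_def has_derivative_transform_within_open)
  moreover have "Ck_on k U (\<lambda>x. frechet_derivative g (at x) i)" if "i \<in> Basis" for i
    using Suc.IH[of "\<lambda>x. frechet_derivative f (at x) i"] Suc.prems that fd by simp
  ultimately show ?case using Suc.prems(1) by (simp add: differentiable_on_eq_differentiable_at)
qed

lemma Ck_on_imp_continuous_on: "Ck_on k U f \<Longrightarrow> continuous_on U f"
  by (cases k) (auto intro: differentiable_imp_continuous_on)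

lemma Ck_on_SucD:
  shows "Ck_on (Suc k) U f \<Longrightarrow> Ck_on k U f"
proof (induction k arbitrary: f)
  case 0 then show ?case by (auto intro: differentiable_imp_continuous_on)
next
  case (Suc k) then show ?case by (metis Ck_on.simps(2))
qed

lemma Ck_on_le: "Ck_on k U f \<Longrightarrow> j \<le> k \<Longrightarrow> Ck_on j U f"
proof (induction k)
  case (Suc k) then show ?case by (metis Ck_on_SucD le_Suc_eq)
qed simp

lemma Ck_on_subset:
  shows "Ck_on k U f \<Longrightarrow> V \<subseteq> U \<Longrightarrow> Ck_on k V f"
  by (induction k arbitrary: f) (auto intro: continuous_on_subset differentiable_on_subset)

lemma Suc_Ck_on_imp_differentiable_at:
  "Ck_on (Suc k) U f \<Longrightarrow> open U \<Longrightarrow> x \<in> U \<Longrightarrow> f differentiable at x"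
  by (simp add: differentiable_on_eq_differentiable_at)

lemma Ck_on_const: "Ck_on k U (\<lambda>x. c)"
proof (induction k arbitrary: c)
  case 0 then show ?case by simp
next
  case (Suc k)
  have "frechet_derivative (\<lambda>x. c) (at x) = (\<lambda>h. 0)" for x
    by (metis frechet_derivative_at has_derivative_const)
  then show ?case using Suc by simp
qed

lemma Ck_on_add:
  fixes f g :: "'a::euclidean_space \<Rightarrow> 'b::real_normed_vector"
  assumes "open U" "Ck_on k U f" "Ck_on k U g"
  shows "Ck_on k U (\<lambda>x. f x + g x)"
  using assms
proof (induction k arbitrary: f g)
  case 0 then show ?case by (simp add: continuous_on_add)
next
  case (Suc k)
  have df: "f differentiable at x" "g differentiable at x" if "x \<in> U" for x
    using Suc.prems that by (auto simp: differentiable_on_eq_differentiable_at)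
  have fd: "frechet_derivative (\<lambda>x. f x + g x) (at x) i
            = frechet_derivative f (at x) i + frechet_derivative g (at x) i" if "x \<in> U" for x i
  proof -
    have "((\<lambda>x. f x + g x) has_derivative
           (\<lambda>h. frechet_derivative f (at x) h + frechet_derivative g (at x) h)) (at x)"
      using df[OF that] by (intro has_derivative_add) (auto simp: frechet_derivative_works)
    from frechet_derivative_at[OF this] show ?thesis by metis
  qed
  have "Ck_on k U (\<lambda>x. frechet_derivative (\<lambda>x. f x + g x) (at x) i)" if "i \<in> Basis" for i
  proof (rule Ck_on_cong[OF Suc.prems(1)])
    show "Ck_on k U (\<lambda>x. frechet_derivative f (at x) i + frechet_derivative g (at x) i)"
      using Suc.IH Suc.prems that by simp
  qed (simp add: fd)
  moreover have "(\<lambda>x. f x + g x) differentiable_on U"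
    using Suc.prems by (simp add: differentiable_on_add)
  ultimately show ?case by simp
qed

lemma Ck_on_mult:
  fixes f g :: "'a::euclidean_space \<Rightarrow> complex"
  assumes "open U" "Ck_on k U f" "Ck_on k U g"
  shows "Ck_on k U (\<lambda>x. f x * g x)"
  using assms
proof (induction k arbitrary: f g)
  case 0 then show ?case by (simp add: continuous_on_mult)
next
  case (Suc k)
  have df: "f differentiable at x" "g differentiable at x" if "x \<in> U" for x
    using Suc.prems that by (auto simp: differentiable_on_eq_differentiable_at)
  have fd: "frechet_derivative (\<lambda>x. f x * g x) (at x) i
            = f x * frechet_derivative g (at x) i + frechet_derivative f (at x) i * g x" if "x \<in> U" for x i
  proof -
    have "((\<lambda>x. f x * g x) has_derivative
           (\<lambda>h. f x * frechet_derivative g (at x) h + frechet_derivative f (at x) h * g x)) (at x)"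
      using df[OF that] by (intro has_derivative_mult) (auto simp: frechet_derivative_works)
    from frechet_derivative_at[OF this] show ?thesis by metis
  qed
  have "Ck_on k U (\<lambda>x. frechet_derivative (\<lambda>x. f x * g x) (at x) i)" if "i \<in> Basis" for i
  proof (rule Ck_on_cong[OF Suc.prems(1)])
    show "Ck_on k U (\<lambda>x. f x * frechet_derivative g (at x) i + frechet_derivative f (at x) i * g x)"
      using Suc.IH Suc.prems that Ck_on_SucD[OF Suc.prems(2)] Ck_on_SucD[OF Suc.prems(3)]
      by (intro Ck_on_add[OF Suc.prems(1)]) simp_all
  qed (simp add: fd)
  moreover have "(\<lambda>x. f x * g x) differentiable_on U"
    using Suc.prems by (simp add: differentiable_on_mult)
  ultimately show ?case by simp
qed

lemma Ck_on_sum: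
  fixes f :: "'i \<Rightarrow> 'a::euclidean_space \<Rightarrow> 'b::real_normed_vector"
  assumes "open U" "\<And>t. t \<in> T \<Longrightarrow> Ck_on k U (f t)"
  shows "Ck_on k U (\<lambda>x. \<Sum>t\<in>T. f t x)"
  using assms(2)
proof (induction T rule: infinite_finite_induct)
  case (infinite A) then show ?case using Ck_on_const by simp
next
  case empty then show ?case using Ck_on_const by simp
next
  case (insert a A) then show ?case by (simp add: Ck_on_add assms(1))
qed

lemma Ck_on_inner: "Ck_on k (U::'a::euclidean_space set) (\<lambda>x. of_real (x \<bullet> i) :: complex)"
proof (cases k)
  case 0 then show ?thesis by (simp add: continuous_intros)
next
  case (Suc k')
  have hd: "((\<lambda>x. of_real (x \<bullet> i) :: complex) has_derivative (\<lambda>h. of_real (h \<bullet> i))) (at x)" for x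
    by (auto intro!: derivative_eq_intros)
  have "frechet_derivative (\<lambda>x. of_real (x \<bullet> i) :: complex) (at x) = (\<lambda>h. of_real (h \<bullet> i))" for x
    using frechet_derivative_at[OF hd] by metis
  then show ?thesis
    using Suc hd Ck_on_const
    by (auto simp: differentiable_on_def differentiable_def intro: has_derivative_at_withinI)
qed

lemma has_derivative_inner_self_powr:
  fixes x :: "'a::euclidean_space"
  assumes "x \<noteq> 0"
  shows "((\<lambda>x. of_real ((x \<bullet> x) powr q) :: complex) has_derivative
          (\<lambda>h. of_real (q * (x \<bullet> x) powr (q - 1) * (2 * (x \<bullet> h))))) (at x)"
proof -
  have pos: "x \<bullet> x > 0" using assms by simp
  have e: "(x \<bullet> x) powr (q - 1) = (x \<bullet> x) powr q / (x \<bullet> x)" using pos by (simp add: powr_diff)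
  show ?thesis
    using pos
    by (auto intro!: derivative_eq_intros simp: algebra_simps inner_commute e)
qed

lemma Ck_on_inner_self_powr:
  assumes "open U" "0 \<notin> U"
  shows "Ck_on k (U::'a::euclidean_space set) (\<lambda>x. of_real ((x \<bullet> x) powr q) :: complex)"
proof (induction k arbitrary: q)
  case 0
  have "continuous_on U (\<lambda>x. (x \<bullet> x) powr q)"
    using assms(2) by (intro continuous_intros) auto
  then show ?case by (simp add: continuous_on_of_real)
next
  case (Suc k)
  have hd: "((\<lambda>x. of_real ((x \<bullet> x) powr q) :: complex) has_derivative
          (\<lambda>h. of_real (q * (x \<bullet> x) powr (q - 1) * (2 * (x \<bullet> h))))) (at x)" if "x \<in> U" for x
    using assms(2) that by (intro has_derivative_inner_self_powr) auto
  have fd: "frechet_derivative (\<lambda>x. of_real ((x \<bullet> x) powr q) :: complex) (at x) i =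
     of_real (2*q) * (of_real ((x \<bullet> x) powr (q - 1)) * of_real (x \<bullet> i))" if "x \<in> U" for x i
  proof -
    have "frechet_derivative (\<lambda>x. of_real ((x \<bullet> x) powr q) :: complex) (at x)
          = (\<lambda>h. of_real (q * (x \<bullet> x) powr (q - 1) * (2 * (x \<bullet> h))))"
      using frechet_derivative_at[OF hd[OF that]] by simp
    then show ?thesis by (simp add: algebra_simps)
  qed
  have "Ck_on k U (\<lambda>x. frechet_derivative (\<lambda>x. of_real ((x \<bullet> x) powr q) :: complex) (at x) i)" for i
  proof (rule Ck_on_cong[OF assms(1)])
    show "Ck_on k U (\<lambda>x. of_real (2*q) * (of_real ((x \<bullet> x) powr (q - 1)) * of_real (x \<bullet> i)) :: complex)"
      by (intro Ck_on_mult Ck_on_const Ck_on_inner Suc.IH assms(1))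
  qed (simp add: fd)
  moreover have "(\<lambda>x. of_real ((x \<bullet> x) powr q) :: complex) differentiable_on U"
    using hd by (auto simp: differentiable_on_def differentiable_def intro: has_derivative_at_withinI)
  ultimately show ?case by simp
qed

section \<open>The operator \<open>\<partial>/\<partial>r\<^sup>2\<close> on functions on \<open>\<real>\<^sup>m\<close>\<close>

definition radial_Dr2 :: "('a::euclidean_space \<Rightarrow> complex) \<Rightarrow> 'a \<Rightarrow> complex" where
  "radial_Dr2 F x = of_real (1/2 * (x \<bullet> x) powr (-1))
                      * (\<Sum>i\<in>Basis. of_real (x \<bullet> i) * frechet_derivative F (at x) i)"

lemma Ck_on_radial_Dr2:
  assumes "open U" "0 \<notin> U" "Ck_on (Suc k) (U::'a::euclidean_space set) F"
  shows "Ck_on k U (radial_Dr2 F)"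
proof -
  have e: "radial_Dr2 F = (\<lambda>x. of_real (1/2) * of_real ((x \<bullet> x) powr (-1))
                          * (\<Sum>i\<in>Basis. of_real (x \<bullet> i) * frechet_derivative F (at x) i))"
    unfolding radial_Dr2_def by (simp add: fun_eq_iff)
  show ?thesis
    unfolding e using assms(3)
    by (intro Ck_on_mult Ck_on_const Ck_on_inner_self_powr Ck_on_sum Ck_on_inner assms(1,2)) auto
qed

lemma Ck_on_radial_Dr2_pow:
  assumes "open U" "0 \<notin> U" "Ck_on n (U::'a::euclidean_space set) F" "l \<le> n"
  shows "Ck_on (n - l) U ((radial_Dr2 ^^ l) F)"
  using assms(4)
proof (induction l)
  case 0 then show ?case using assms(3) by simp
next
  case (Suc l)
  then have "Ck_on (Suc (n - Suc l)) U ((radial_Dr2 ^^ l) F)" by (simp add: Suc_diff_Suc)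
  then show ?case using Ck_on_radial_Dr2 assms by simp
qed

lemma has_vector_derivative_radial:
  fixes F :: "'a::euclidean_space \<Rightarrow> complex"
  assumes dF: "F differentiable at (r *\<^sub>R \<xi>)" and r: "r > 0" and \<xi>: "norm \<xi> = 1"
  shows "((\<lambda>s. F (s *\<^sub>R \<xi>)) has_vector_derivative (of_real (2*r) * radial_Dr2 F (r *\<^sub>R \<xi>))) (at r)"
proof -
  define D where "D = frechet_derivative F (at (r *\<^sub>R \<xi>))"
  have hD: "(F has_derivative D) (at (r *\<^sub>R \<xi>))"
    using dF by (simp add: D_def frechet_derivative_works)
  then have lin: "linear D" using has_derivative_linear by blast
  have "((\<lambda>s. s *\<^sub>R \<xi>) has_derivative (\<lambda>h. h *\<^sub>R \<xi>)) (at r)"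
    by (auto intro!: derivative_eq_intros)
  from has_derivative_compose[OF this hD]
  have vd: "((\<lambda>s. F (s *\<^sub>R \<xi>)) has_vector_derivative D \<xi>) (at r)"
    using lin by (simp add: o_def has_vector_derivative_def linear_scale)
  have "D \<xi> = D (\<Sum>i\<in>Basis. (\<xi> \<bullet> i) *\<^sub>R i)" by (simp add: euclidean_representation)
  also have "\<dots> = (\<Sum>i\<in>Basis. of_real (\<xi> \<bullet> i) * D i)"
    using lin by (simp add: linear_sum linear_scale scaleR_conv_of_real)
  finally have e1: "D \<xi> = (\<Sum>i\<in>Basis. of_real (\<xi> \<bullet> i) * D i)" .
  have xx: "(r *\<^sub>R \<xi>) \<bullet> (r *\<^sub>R \<xi>) = r^2"
    using \<xi> by (simp add: power2_eq_square power2_norm_eq_inner[symmetric])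
  have "of_real (2*r) * radial_Dr2 F (r *\<^sub>R \<xi>) =
        of_real (2*r) * of_real (1/2 * (r^2) powr (-1)) * of_real r
          * (\<Sum>i\<in>Basis. of_real (\<xi> \<bullet> i) * D i)"
    unfolding radial_Dr2_def xx D_def by (simp add: sum_distrib_left mult.assoc)
  also have "of_real (2*r) * of_real (1/2 * (r^2) powr (-1)) * of_real r = (1::complex)"
  proof -
    have "(r^2) powr (-1) = 1 / r^2" using r by (simp add: powr_minus divide_inverse)
    then show ?thesis using r by (simp add: power2_eq_square flip: of_real_mult)
  qed
  finally show ?thesis using vd e1 by simp
qed

section \<open>The Leibniz rule for \<open>\<partial>/\<partial>r\<^sup>2\<close>\<close>

lemma sum_binomial_Suc_split:
  fixes X Y :: "nat \<Rightarrow> 'a::comm_ring_1"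
  shows "(\<Sum>k\<le>Suc j. of_nat (Suc j choose k) * X k * Y (Suc j - k)) =
         (\<Sum>k\<le>j. of_nat (j choose k) * (X (Suc k) * Y (j - k) + X k * Y (Suc (j - k))))"
proof -
  have A: "(\<Sum>k\<le>Suc j. of_nat (Suc j choose k) * X k * Y (Suc j - k)) =
      X 0 * Y (Suc j) + (\<Sum>k\<le>j. of_nat (j choose k) * X (Suc k) * Y (j - k))
        + (\<Sum>k\<le>j. of_nat (j choose Suc k) * X (Suc k) * Y (j - k))"
    by (simp only: sum.atMost_Suc_shift) (simp add: sum.distrib algebra_simps del: sum.atMost_Suc)
  have "(\<Sum>k\<le>j. of_nat (j choose k) * X k * Y (Suc (j - k))) =
        (\<Sum>k\<le>Suc j. of_nat (j choose k) * X k * Y (Suc j - k))"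
    by (simp add: Suc_diff_le binomial_eq_0)
  also have "\<dots> = X 0 * Y (Suc j) + (\<Sum>k\<le>j. of_nat (j choose Suc k) * X (Suc k) * Y (j - k))"
    by (simp only: sum.atMost_Suc_shift) (simp del: sum.atMost_Suc)
  finally show ?thesis using A
    by (simp add: sum.distrib algebra_simps)
qed

lemma has_vector_derivative_of_real_comp_power2:
  fixes c :: "real \<Rightarrow> real"
  assumes "c differentiable at (r^2)"
  shows "((\<lambda>s. of_real (c (s^2)) :: complex) has_vector_derivative
           of_real (deriv c (r^2) * (2 * r))) (at r)"
proof -
  have "(c has_real_derivative deriv c (r^2)) (at (r^2))"
    using assms DERIV_deriv_iff_real_differentiable by blast
  moreover have "((\<lambda>s. s^2) has_real_derivative 2 * r) (at r)"
    by (auto intro!: derivative_eq_intros)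
  ultimately have "((\<lambda>s. c (s^2)) has_real_derivative deriv c (r^2) * (2 * r)) (at r)"
    by (rule DERIV_chain2)
  then show ?thesis by (rule has_vector_derivative_of_real)
qed

definition Leibniz_Dr2 :: "nat \<Rightarrow> (real \<Rightarrow> real) \<Rightarrow> ('a::euclidean_space \<Rightarrow> complex) \<Rightarrow> 'a \<Rightarrow> real \<Rightarrow> complex"
  where "Leibniz_Dr2 j c \<Phi> \<xi> s = (\<Sum>k\<le>j. of_nat (j choose k) * of_real ((deriv ^^ k) c (s^2))
                                    * (radial_Dr2 ^^ (j - k)) \<Phi> (s *\<^sub>R \<xi>))"

lemma has_vector_derivative_Leibniz_Dr2:
  fixes \<xi> :: "'a::euclidean_space"
  assumes \<xi>: "norm \<xi> = 1" and V: "open V" "0 \<notin> V" and r: "0 < r" "r *\<^sub>R \<xi> \<in> V"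
    and \<Phi>: "Ck_on N V \<Phi>" and j: "j < N"
    and c: "\<And>p. p \<le> j \<Longrightarrow> (deriv ^^ p) c differentiable (at (r^2))"
  shows "(Leibniz_Dr2 j c \<Phi> \<xi> has_vector_derivative of_real (2*r) * Leibniz_Dr2 (Suc j) c \<Phi> \<xi> r) (at r)"
proof -
  define X where "X k = (of_real ((deriv ^^ k) c (r^2)) :: complex)" for k
  define Y where "Y l = (radial_Dr2 ^^ l) \<Phi> (r *\<^sub>R \<xi>)" for l
  have term_deriv: "((\<lambda>s. of_nat (j choose k) * (of_real ((deriv ^^ k) c (s^2))
                   * (radial_Dr2 ^^ (j - k)) \<Phi> (s *\<^sub>R \<xi>))) has_vector_derivative
               of_real (2*r) * (of_nat (j choose k) * (X (Suc k) * Y (j - k) + X k * Y (Suc (j - k))))) (at r)"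
    if k: "k \<le> j" for k
  proof -
    have c1: "((\<lambda>s. of_real ((deriv ^^ k) c (s^2)) :: complex) has_vector_derivative
                 of_real ((deriv ^^ Suc k) c (r^2) * (2 * r))) (at r)"
      using has_vector_derivative_of_real_comp_power2[OF c[OF k]] by simp
    have "Ck_on (N - (j - k)) V ((radial_Dr2 ^^ (j - k)) \<Phi>)"
      using Ck_on_radial_Dr2_pow[OF V \<Phi>, of "j - k"] j by simp
    then have "Ck_on (Suc (N - Suc (j - k))) V ((radial_Dr2 ^^ (j - k)) \<Phi>)"
      using j k by (simp add: Suc_diff_Suc)
    then have "(radial_Dr2 ^^ (j - k)) \<Phi> differentiable at (r *\<^sub>R \<xi>)"
      using Suc_Ck_on_imp_differentiable_at V r by blast
    from has_vector_derivative_radial[OF this r(1) \<xi>]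
    have c2: "((\<lambda>s. (radial_Dr2 ^^ (j - k)) \<Phi> (s *\<^sub>R \<xi>)) has_vector_derivative
               of_real (2 * r) * Y (Suc (j - k))) (at r)"
      by (simp add: Y_def)
    from has_vector_derivative_mult_right[OF has_vector_derivative_mult[OF c1 c2], of "of_nat (j choose k)"]
    show ?thesis by (simp add: X_def Y_def algebra_simps)
  qed
  have "(Leibniz_Dr2 j c \<Phi> \<xi> has_vector_derivative
          (\<Sum>k\<le>j. of_real (2*r) * (of_nat (j choose k) * (X (Suc k) * Y (j - k) + X k * Y (Suc (j - k))))))
        (at r)"
    unfolding Leibniz_Dr2_def[abs_def] using term_deriv
    by (intro has_vector_derivative_sum) (simp add: mult.assoc)
  moreover have "(\<Sum>k\<le>j. of_real (2*r) * (of_nat (j choose k) * (X (Suc k) * Y (j - k) + X k * Y (Suc (j - k)))))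
      = of_real (2*r) * (\<Sum>k\<le>Suc j. of_nat (Suc j choose k) * X k * Y (Suc j - k))"
    by (simp only: sum_binomial_Suc_split sum_distrib_left)
  ultimately show ?thesis by (simp add: Leibniz_Dr2_def X_def Y_def)
qed

text \<open>The weights \<open>a t\<close> let the hypotheses be waived for terms that do not occur; this is
  needed because \<open>h\<close> is only \<open>n\<close> times differentiable.\<close>

lemma Dr2_pow_Leibniz:
  fixes \<xi> :: "'a::euclidean_space" and T :: "'t set" and a :: "'t \<Rightarrow> complex"
    and c :: "'t \<Rightarrow> real \<Rightarrow> real" and \<Phi> :: "'t \<Rightarrow> 'a \<Rightarrow> complex" and F :: "real \<Rightarrow> complex"
  assumes T: "finite T" and \<xi>: "norm \<xi> = 1" and V: "open V" "0 \<notin> V"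
    and c: "\<And>t p r. t \<in> T \<Longrightarrow> a t \<noteq> 0 \<Longrightarrow> p < N \<Longrightarrow> 0 < r \<Longrightarrow> r *\<^sub>R \<xi> \<in> V \<Longrightarrow>
               (deriv ^^ p) (c t) differentiable (at (r^2))"
    and \<Phi>: "\<And>t. t \<in> T \<Longrightarrow> a t \<noteq> 0 \<Longrightarrow> Ck_on N V (\<Phi> t)"
    and F: "\<And>r. 0 < r \<Longrightarrow> r *\<^sub>R \<xi> \<in> V \<Longrightarrow> F r = (\<Sum>t\<in>T. a t * of_real (c t (r^2)) * \<Phi> t (r *\<^sub>R \<xi>))"
  shows "j \<le> N \<Longrightarrow> 0 < r \<Longrightarrow> r *\<^sub>R \<xi> \<in> V \<Longrightarrow>
           (Dr2 ^^ j) F r = (\<Sum>t\<in>T. a t * Leibniz_Dr2 j (c t) (\<Phi> t) \<xi> r)"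
proof (induction j arbitrary: r)
  case 0
  then show ?case using F by (simp add: Leibniz_Dr2_def mult.assoc)
next
  case (Suc j)
  define S where "S = {0<..} \<inter> (\<lambda>r. r *\<^sub>R \<xi>) -` V"
  have "open S" unfolding S_def by (auto intro!: open_Int open_vimage V continuous_intros)
  have "r \<in> S" using Suc.prems by (simp add: S_def)
  define R where "R j s = (\<Sum>t\<in>T. a t * Leibniz_Dr2 j (c t) (\<Phi> t) \<xi> s)" for j s
  have "(R j has_vector_derivative (\<Sum>t\<in>T. a t * (of_real (2*r) * Leibniz_Dr2 (Suc j) (c t) (\<Phi> t) \<xi> r)))
          (at r)"
    unfolding R_def[abs_def]
  proof (intro has_vector_derivative_sum)
    fix t assume "t \<in> T"
    show "((\<lambda>s. a t * Leibniz_Dr2 j (c t) (\<Phi> t) \<xi> s) has_vector_derivative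
                 a t * (of_real (2*r) * Leibniz_Dr2 (Suc j) (c t) (\<Phi> t) \<xi> r)) (at r)"
    proof (cases "a t = 0")
      case False
      have "(Leibniz_Dr2 j (c t) (\<Phi> t) \<xi> has_vector_derivative
              of_real (2*r) * Leibniz_Dr2 (Suc j) (c t) (\<Phi> t) \<xi> r) (at r)"
        by (rule has_vector_derivative_Leibniz_Dr2[where N=N]) (use Suc.prems \<xi> V c \<Phi> \<open>t \<in> T\<close> False in auto)
      then show ?thesis by (rule has_vector_derivative_mult_right)
    qed simp
  qed
  then have "(R j has_vector_derivative of_real (2*r) * R (Suc j) r) (at r)"
    by (simp add: R_def sum_distrib_left mult.left_commute)
  then have "((Dr2 ^^ j) F has_vector_derivative of_real (2*r) * R (Suc j) r) (at r)"
    by (rule has_vector_derivative_transform_within_open[OF _ \<open>open S\<close> \<open>r \<in> S\<close>])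
       (use Suc.IH Suc.prems in \<open>auto simp: S_def R_def\<close>)
  then have "(Dr2 ^^ Suc j) F r = (1 / (2 * r)) *\<^sub>R (of_real (2*r) * R (Suc j) r)"
    by (simp add: Dr2_def vector_derivative_at)
  also have "\<dots> = R (Suc j) r" using Suc.prems by (simp add: scaleR_conv_of_real)
  finally show ?case by (simp add: R_def)
qed

lemma deriv_funpow_const: "(deriv ^^ k) (\<lambda>_. c::real) = (\<lambda>_. if k = 0 then c else 0)"
  by (induction k) auto

lemma Dr2_pow_radial:
  fixes \<xi> :: "'a::euclidean_space" and \<Phi> :: "'a \<Rightarrow> complex"
  assumes "norm \<xi> = 1" "open V" "0 \<notin> V" "Ck_on N V \<Phi>"
    and F: "\<And>r. 0 < r \<Longrightarrow> r *\<^sub>R \<xi> \<in> V \<Longrightarrow> F r = \<Phi> (r *\<^sub>R \<xi>)"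
    and "j \<le> N" "0 < r" "r *\<^sub>R \<xi> \<in> V"
  shows "(Dr2 ^^ j) F r = (radial_Dr2 ^^ j) \<Phi> (r *\<^sub>R \<xi>)"
proof -
  have "(Dr2 ^^ j) F r = (\<Sum>t\<in>{()}. 1 * Leibniz_Dr2 j (\<lambda>_. 1) \<Phi> \<xi> r)"
    by (rule Dr2_pow_Leibniz[where c="\<lambda>_ _. 1"]) (use assms in \<open>simp_all add: deriv_funpow_const\<close>)
  then have "(Dr2 ^^ j) F r = Leibniz_Dr2 j (\<lambda>_. 1) \<Phi> \<xi> r" by simp
  also have "\<dots> = (\<Sum>k\<le>j. if k = 0 then (radial_Dr2 ^^ j) \<Phi> (r *\<^sub>R \<xi>) else 0)"
    unfolding Leibniz_Dr2_def by (rule sum.cong) (auto simp: deriv_funpow_const)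
  finally show ?thesis by simp
qed

section \<open>Grassmann algebra\<close>

lemma gmul_infinite: "infinite C \<Longrightarrow> gmul a b C = 0"
  by (simp add: gmul_def)

lemma gmul_cong: "(\<And>E. E \<subseteq> C \<Longrightarrow> F E = F' E) \<Longrightarrow> gmul a F C = gmul a F' C"
  unfolding gmul_def by (intro sum.cong) auto

lemma gsign_Un_left:
  assumes "finite A" "finite B" "finite C" "A \<inter> B = {}"
  shows "gsign (A \<union> B) C = gsign A C * gsign B C"
proof -
  have "((A \<union> B) \<times> C) \<inter> {(p, q). q < p} = ((A \<times> C) \<inter> {(p, q). q < p}) \<union> ((B \<times> C) \<inter> {(p, q). q < p})"
    by auto
  moreover have "((A \<times> C) \<inter> {(p, q). q < p}) \<inter> ((B \<times> C) \<inter> {(p, q). q < p}) = {}"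
    using assms(4) by auto
  ultimately show ?thesis
    unfolding gsign_def using assms by (simp add: card_Un_disjoint power_add)
qed

lemma gsign_Un_right:
  assumes "finite A" "finite B" "finite C" "B \<inter> C = {}"
  shows "gsign A (B \<union> C) = gsign A B * gsign A C"
proof -
  have "(A \<times> (B \<union> C)) \<inter> {(p, q). q < p} = ((A \<times> B) \<inter> {(p, q). q < p}) \<union> ((A \<times> C) \<inter> {(p, q). q < p})"
    by auto
  moreover have "((A \<times> B) \<inter> {(p, q). q < p}) \<inter> ((A \<times> C) \<inter> {(p, q). q < p}) = {}"
    using assms(4) by auto
  ultimately show ?thesis
    unfolding gsign_def using assms by (simp add: card_Un_disjoint power_add)
qed

lemma gsign_assoc:
  assumes "finite A" "finite B" "finite R" "A \<inter> B = {}" "A \<inter> R = {}" "B \<inter> R = {}"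
  shows "gsign A B * gsign (A \<union> B) R = gsign A (B \<union> R) * gsign B R"
  using assms by (simp add: gsign_Un_left gsign_Un_right ac_simps)

lemma gmul_assoc: "gmul (gmul a b) c = gmul a (gmul b c)"
proof
  fix C
  show "gmul (gmul a b) c C = gmul a (gmul b c) C"
  proof (cases "finite C")
    case False then show ?thesis by (simp add: gmul_infinite)
  next
    case fin: True
    have diff: "B \<subseteq> A \<Longrightarrow> C - B - (A - B) = C - A" for A B :: "nat set" by auto
    let ?I = "Sigma (Pow C) (\<lambda>A1. Pow (C - A1))"
    have "gmul (gmul a b) c C = (\<Sum>(A, A1)\<in>Sigma (Pow C) Pow.
             gsign A1 (A - A1) * gsign A (C - A) * a A1 * b (A - A1) * c (C - A))"
      unfolding gmul_def using fin
      by (simp add: sum.Sigma finite_subset sum_distrib_left sum_distrib_right ac_simps)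
    also have "\<dots> = (\<Sum>(A1, B)\<in>?I. gsign A1 B * gsign (A1 \<union> B) (C - A1 - B) * a A1 * b B * c (C - A1 - B))"
      by (rule sum.reindex_bij_witness[where i="\<lambda>(A1, B). (A1 \<union> B, A1)" and j="\<lambda>(A, A1). (A1, A - A1)"])
         (auto simp: Un_absorb1 diff)
    also have "\<dots> = (\<Sum>(A1, B)\<in>?I. gsign A1 (C - A1) * gsign B (C - A1 - B) * a A1 * b B * c (C - A1 - B))"
    proof (rule sum.cong[OF refl], clarify)
      fix A1 B assume sub: "A1 \<subseteq> C" "B \<subseteq> C - A1"
      then have "finite A1" "finite B" "finite (C - A1 - B)" using fin by (auto intro: finite_subset)
      then have "gsign A1 B * gsign (A1 \<union> B) (C - A1 - B) = gsign A1 (B \<union> (C - A1 - B)) * gsign B (C - A1 - B)"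
        using sub by (intro gsign_assoc) auto
      moreover have "B \<union> (C - A1 - B) = C - A1" using sub by auto
      ultimately show "gsign A1 B * gsign (A1 \<union> B) (C - A1 - B) * a A1 * b B * c (C - A1 - B)
          = gsign A1 (C - A1) * gsign B (C - A1 - B) * a A1 * b B * c (C - A1 - B)"
        by simp
    qed
    also have "\<dots> = gmul a (gmul b c) C"
      unfolding gmul_def using fin
      by (simp add: sum.Sigma[symmetric] finite_subset sum_distrib_left ac_simps)
    finally show ?thesis .
  qed
qed

lemma gmul_gone_left: "finite C \<Longrightarrow> gmul gone c C = c C"
proof -
  assume fin: "finite C"
  have "gmul gone c C = (\<Sum>A\<in>Pow C. if A = {} then gsign A (C - A) * c (C - A) else 0)"
    unfolding gmul_def gone_def by (intro sum.cong) auto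
  also have "\<dots> = gsign {} C * c C" using fin by (simp add: sum.delta')
  finally show ?thesis by (simp add: gsign_def)
qed

lemma gmul_gone_gmul: "gmul gone (gmul a b) = gmul a b"
proof
  fix C show "gmul gone (gmul a b) C = gmul a b C"
    by (cases "finite C") (simp_all add: gmul_gone_left gmul_infinite)
qed

lemma gmul_gpow_gpow: "gmul (gpow x j) (gmul (gpow x i) c) = gmul (gpow x (j + i)) c"
  by (induction j) (simp_all add: gmul_gone_gmul gmul_assoc)

lemma gmul_sum_left: "gmul (\<lambda>B. \<Sum>t\<in>T. X t B) b = (\<lambda>C. \<Sum>t\<in>T. gmul (X t) b C)"
  unfolding gmul_def by (simp add: fun_eq_iff sum_distrib_left sum_distrib_right sum.swap[of _ T])

lemma gmul_sum_right: "gmul a (\<lambda>B. \<Sum>t\<in>T. Y t B) = (\<lambda>C. \<Sum>t\<in>T. gmul a (Y t) C)"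
  unfolding gmul_def by (simp add: fun_eq_iff sum_distrib_left sum.swap[of _ T])

lemma gmul_mult_left: "gmul (\<lambda>B. c * X B) b = (\<lambda>C. c * gmul X b C)"
  unfolding gmul_def by (simp add: fun_eq_iff sum_distrib_left ac_simps)

lemma gmul_mult_right: "gmul a (\<lambda>B. c * Y B) = (\<lambda>C. c * gmul a Y C)"
  unfolding gmul_def by (simp add: fun_eq_iff sum_distrib_left ac_simps)

lemma gmul_divide_left: "gmul (\<lambda>B. X B / d) b = (\<lambda>C. gmul X b C / d)"
  unfolding gmul_def by (simp add: fun_eq_iff sum_divide_distrib)

definition homogeneous :: "nat \<Rightarrow> grass \<Rightarrow> bool" where
  "homogeneous p a \<longleftrightarrow> (\<forall>B. a B \<noteq> 0 \<longrightarrow> card B = p)"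

lemma homogeneous_gmul:
  assumes "homogeneous p a" "homogeneous q b"
  shows "homogeneous (p + q) (gmul a b)"
  unfolding homogeneous_def
proof (intro allI impI)
  fix C assume nz: "gmul a b C \<noteq> 0"
  then have fin: "finite C" using gmul_infinite by blast
  obtain A where A: "A \<in> Pow C" "gsign A (C - A) * a A * b (C - A) \<noteq> 0"
    using nz unfolding gmul_def by (meson sum.neutral)
  then have "card A = p" "card (C - A) = q" using assms by (auto simp: homogeneous_def)
  moreover have "card C = card A + card (C - A)"
    using A(1) fin by (simp add: card_Diff_subset finite_subset card_mono)
  ultimately show "card C = p + q" by simp
qed

lemma homogeneous_gone: "homogeneous 0 gone"
  by (simp add: homogeneous_def gone_def)

lemma homogeneous_gen: "homogeneous 1 (gen k)"
  by (simp add: homogeneous_def gen_def)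

lemma homogeneous_gsq: "homogeneous 2 (gsq n)"
  unfolding homogeneous_def
proof (intro allI impI)
  fix B assume "gsq n B \<noteq> 0"
  then obtain j where "gmul (gen (2*j - 1)) (gen (2*j)) B \<noteq> 0"
    unfolding gsq_def by (meson sum.neutral)
  with homogeneous_gmul[OF homogeneous_gen homogeneous_gen] show "card B = 2"
    by (auto simp: homogeneous_def)
qed

lemma homogeneous_gpow: "homogeneous p a \<Longrightarrow> homogeneous (p * i) (gpow a i)"
  by (induction i) (simp_all add: homogeneous_gone homogeneous_gmul)

lemma gmul_homogeneous_cong:
  assumes "homogeneous p a" "finite C"
    and "\<And>D. D \<subseteq> C \<Longrightarrow> card D + p = card C \<Longrightarrow> F D = F' D"
  shows "gmul a F C = gmul a F' C"
  unfolding gmul_def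
proof (rule sum.cong[OF refl])
  fix A assume A: "A \<in> Pow C"
  show "gsign A (C - A) * a A * F (C - A) = gsign A (C - A) * a A * F' (C - A)"
  proof (cases "a A = 0")
    case False
    then have "card A = p" using assms(1) by (simp add: homogeneous_def)
    moreover have "card C = card A + card (C - A)"
      using A assms(2) by (simp add: card_Diff_subset finite_subset card_mono)
    ultimately show ?thesis using assms(3)[of "C - A"] by simp
  qed simp
qed

lemma gmul_homogeneous_eq_0:
  assumes "homogeneous p a" "card C < p"
  shows "gmul a F C = 0"
proof (cases "finite C")
  case True
  have "a A = 0" if "A \<subseteq> C" for A
    using assms card_mono[OF True that] by (auto simp: homogeneous_def)
  then show ?thesis unfolding gmul_def by (simp add: sum.neutral)
qed (simp add: gmul_infinite)

section \<open>The Berezin integral\<close>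

lemma fders_cong: "(\<And>E. E \<subseteq> B \<union> {1..k} \<Longrightarrow> a E = a' E) \<Longrightarrow> fders k a B = fders k a' B"
proof (induction k arbitrary: B)
  case (Suc k)
  have sub: "insert (Suc k) B \<union> {1..k} \<subseteq> B \<union> {1..Suc k}" by auto
  have "fders k a (insert (Suc k) B) = fders k a' (insert (Suc k) B)"
    by (rule Suc.IH) (use Suc.prems sub in blast)
  then show ?case by (simp add: fder_def)
qed simp

lemma fders_sum: "fders k (\<lambda>E. \<Sum>t\<in>T. Y t E) B = (\<Sum>t\<in>T. fders k (Y t) B)"
  by (induction k arbitrary: B) (simp_all add: fder_def sum_distrib_left)

lemma fders_mult: "fders k (\<lambda>E. c * Y E) B = c * fders k Y B"
  by (induction k arbitrary: B) (simp_all add: fder_def)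

lemma fders_zero: "fders k (\<lambda>E. 0) B = 0"
  by (induction k arbitrary: B) (simp_all add: fder_def)

lemma berezin_sum: "berezin n (\<lambda>E. \<Sum>t\<in>T. Y t E) = (\<Sum>t\<in>T. berezin n (Y t))"
  by (simp add: berezin_def fders_sum sum_distrib_left)

lemma berezin_mult_left: "berezin n (\<lambda>E. c * Y E) = c * berezin n Y"
  by (simp add: berezin_def fders_mult)

lemma berezin_divide: "berezin n (\<lambda>E. Y E / c) = berezin n Y / c"
  by (simp add: divide_inverse_commute berezin_mult_left)

lemma berezin_cong: "(\<And>E. E \<subseteq> {1..2*n} \<Longrightarrow> a E = a' E) \<Longrightarrow> berezin n a = berezin n a'"
  unfolding berezin_def using fders_cong[of "{}" "2*n" a a'] by simp

lemma berezin_eq_0: "(\<And>E. E \<subseteq> {1..2*n} \<Longrightarrow> a E = 0) \<Longrightarrow> berezin n a = 0"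
  using berezin_cong[of n a "\<lambda>E. 0"] by (simp add: berezin_def fders_zero)

lemma continuous_on_gmul:
  "(\<And>E. E \<subseteq> C \<Longrightarrow> continuous_on S (\<lambda>\<xi>. Y \<xi> E)) \<Longrightarrow> continuous_on S (\<lambda>\<xi>. gmul a (Y \<xi>) C)"
  unfolding gmul_def by (intro continuous_intros) auto

lemma continuous_on_fders:
  "(\<And>E. E \<subseteq> B \<union> {1..k} \<Longrightarrow> continuous_on S (\<lambda>\<xi>. X \<xi> E)) \<Longrightarrow>
     continuous_on S (\<lambda>\<xi>. fders k (X \<xi>) B)"
proof (induction k arbitrary: B)
  case (Suc k)
  have sub: "insert (Suc k) B \<union> {1..k} \<subseteq> B \<union> {1..Suc k}" by auto
  have "continuous_on S (\<lambda>\<xi>. fders k (X \<xi>) (insert (Suc k) B))"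
    by (rule Suc.IH) (use Suc.prems sub in blast)
  then show ?case by (cases "Suc k \<in> B") (simp_all add: fder_def continuous_intros)
qed simp

lemma continuous_on_berezin:
  "(\<And>E. E \<subseteq> {1..2*n} \<Longrightarrow> continuous_on S (\<lambda>\<xi>. X \<xi> E)) \<Longrightarrow> continuous_on S (\<lambda>\<xi>. berezin n (X \<xi>))"
  unfolding berezin_def using continuous_on_fders[of "{}" "2*n" S X] by (simp add: continuous_intros)

section \<open>Integration over the sphere\<close>

lemma sphere_int_cong:
  assumes "\<And>\<xi>. \<xi> \<in> sphere 0 1 \<Longrightarrow> \<phi> \<xi> = \<psi> \<xi>"
  shows "sphere_int (\<phi> :: real^'m \<Rightarrow> complex) = sphere_int \<psi>"
proof -
  have "integral (ball 0 1) (\<lambda>x::real^'m. \<phi> (x /\<^sub>R norm x)) = integral (ball 0 1) (\<lambda>x. \<psi> (x /\<^sub>R norm x))"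
  proof (rule integral_spike[of "{0}"])
    fix x :: "real^'m" assume "x \<in> ball 0 1 - {0}"
    then have "x /\<^sub>R norm x \<in> sphere 0 1" by (simp add: norm_divide)
    then show "\<psi> (x /\<^sub>R norm x) = \<phi> (x /\<^sub>R norm x)" using assms by simp
  qed simp
  then show ?thesis by (simp add: sphere_int_def)
qed

lemma integrable_on_ball_radial:
  fixes \<phi> :: "'a::euclidean_space \<Rightarrow> 'b::euclidean_space"
  assumes "continuous_on (sphere 0 1) \<phi>"
  shows "(\<lambda>x. \<phi> (x /\<^sub>R norm x)) integrable_on ball 0 1"
proof -
  define S :: "'a set" where "S = ball 0 1 - {0}"
  have oS: "open S" "bounded S" by (auto simp: S_def)
  have img: "(\<lambda>x. x /\<^sub>R norm x) ` S \<subseteq> sphere 0 1"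
    by (auto simp: S_def sgn_div_norm[symmetric] norm_sgn split: if_splits)
  have cont: "continuous_on S (\<lambda>x. \<phi> (x /\<^sub>R norm x))"
    by (rule continuous_on_compose2[OF assms _ img]) (auto simp: S_def intro!: continuous_intros)
  obtain B where B: "\<And>\<xi>. \<xi> \<in> sphere 0 1 \<Longrightarrow> norm (\<phi> \<xi>) \<le> B"
    using compact_imp_bounded[OF compact_continuous_image[OF assms compact_sphere]]
    unfolding bounded_iff by (metis imageI)
  have SL: "S \<in> sets lebesgue" using oS by (simp add: borel_open sets_completionI_sets)
  have "(\<lambda>x. \<phi> (x /\<^sub>R norm x)) integrable_on S"
  proof (rule measurable_bounded_by_integrable_imp_integrable[where g="\<lambda>x. B"])
    show "(\<lambda>x. \<phi> (x /\<^sub>R norm x)) \<in> borel_measurable (lebesgue_on S)"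
      by (rule continuous_imp_measurable_on_sets_lebesgue[OF cont SL])
    show "(\<lambda>x. B) integrable_on S" using oS by (intro integrable_on_const lmeasurable_open)
    show "norm (\<phi> (x /\<^sub>R norm x)) \<le> B" if "x \<in> S" for x using B img that by blast
  qed (rule SL)
  then show ?thesis
    by (rule integrable_spike_set) (auto simp: S_def intro: negligible_subset[of "{0}"])
qed

lemma sphere_int_sum:
  fixes \<phi> :: "'t \<Rightarrow> real^'m \<Rightarrow> complex"
  assumes "finite T" "\<And>t. t \<in> T \<Longrightarrow> continuous_on (sphere 0 1) (\<phi> t)"
  shows "sphere_int (\<lambda>\<xi>. \<Sum>t\<in>T. \<phi> t \<xi>) = (\<Sum>t\<in>T. sphere_int (\<phi> t))"
  using assms
  by (simp add: sphere_int_def integral_sum integrable_on_ball_radial sum_distrib_left)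

lemma sphere_int_mult_left: "sphere_int (\<lambda>\<xi>. c * \<phi> \<xi>) = c * sphere_int \<phi>"
  by (simp add: sphere_int_def)

lemma sphere_int_divide: "sphere_int (\<lambda>\<xi>. \<phi> \<xi> / c) = sphere_int \<phi> / c"
  by (simp add: sphere_int_def)

section \<open>A binomial cancellation\<close>

lemma sum_triangle_eq_sum_square:
  fixes X :: "nat \<Rightarrow> nat \<Rightarrow> 'a::comm_monoid_add"
  assumes "\<And>k l. k \<le> n \<Longrightarrow> l \<le> n \<Longrightarrow> n < k + l \<Longrightarrow> X k l = 0"
  shows "(\<Sum>p\<le>n. \<Sum>k\<le>p. X k (p - k)) = (\<Sum>k\<le>n. \<Sum>l\<le>n. X k l)"
proof -
  have "(\<Sum>p\<le>n. \<Sum>k\<le>p. X k (p - k)) = (\<Sum>(k,l)\<in>{(k,l). k+l \<le> n}. X k l)"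
    by (rule sum.triangle_reindex_eq[symmetric])
  also have "\<dots> = (\<Sum>(k,l)\<in>{..n} \<times> {..n}. X k l)"
    by (rule sum.mono_neutral_left) (auto, meson assms not_le)
  also have "\<dots> = (\<Sum>k\<le>n. \<Sum>l\<le>n. X k l)" by (simp add: sum.cartesian_product)
  finally show ?thesis .
qed

lemma sum_alternating_inverse_fact:
  "(\<Sum>i\<le>p. (-1)^i / (fact i * fact (p - i)) :: 'a::field_char_0) = (if p = 0 then 1 else 0)"
proof (cases "p = 0")
  case False
  have "(\<Sum>i\<le>p. (-1)^i / (fact i * fact (p - i)) :: 'a) = (\<Sum>i\<le>p. (-1)^i * of_nat (p choose i)) / fact p"
    by (simp add: sum_divide_distrib binomial_fact field_simps)
  also have "\<dots> = 0" using False by (simp add: choose_alternating_sum)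
  finally show ?thesis using False by simp
qed simp

lemma sum_binomial_Taylor_cancel:
  fixes H :: "nat \<Rightarrow> 'a::field_char_0" and B :: "nat \<Rightarrow> nat \<Rightarrow> 'a"
  assumes B0: "\<And>N l. n < N \<Longrightarrow> B N l = 0"
  shows "(\<Sum>j\<le>n. \<Sum>i\<le>n. \<Sum>k\<le>j. of_nat (j choose k) * ((-1)^i / fact i * H (k+i)) / fact j * B (i+j) (j-k))
         = H 0 * (\<Sum>l\<le>n. B l l / fact l)"
proof -
  define f where "f i k l = (-1)^i / (fact i * fact k * fact l) * H (k+i) * B (i+k+l) l" for i k l
  have "(\<Sum>j\<le>n. \<Sum>i\<le>n. \<Sum>k\<le>j. of_nat (j choose k) * ((-1)^i / fact i * H (k+i)) / fact j * B (i+j) (j-k))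
      = (\<Sum>j\<le>n. \<Sum>k\<le>j. \<Sum>i\<le>n. f i k (j - k))"
  proof (rule sum.cong[OF refl])
    fix j
    have "of_nat (j choose k) * ((-1)^i / fact i * H (k+i)) / fact j * B (i+j) (j-k) = f i k (j - k)"
      if "k \<le> j" for i k
    proof -
      have "of_nat (j choose k) / (fact j :: 'a) = 1 / (fact k * fact (j - k))"
        using that by (simp add: binomial_fact field_simps)
      moreover have "i + j = i + k + (j - k)" using that by simp
      ultimately show ?thesis unfolding f_def by (simp add: field_simps)
    qed
    then show "(\<Sum>i\<le>n. \<Sum>k\<le>j. of_nat (j choose k) * ((-1)^i / fact i * H (k+i)) / fact j * B (i+j) (j-k))
        = (\<Sum>k\<le>j. \<Sum>i\<le>n. f i k (j - k))"
      by (simp add: sum.swap[of _ "{..j}"])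
  qed
  also have "\<dots> = (\<Sum>k\<le>n. \<Sum>l\<le>n. \<Sum>i\<le>n. f i k l)"
    by (rule sum_triangle_eq_sum_square) (simp add: f_def B0)
  also have "\<dots> = (\<Sum>l\<le>n. \<Sum>i\<le>n. \<Sum>k\<le>n. f i k l)"
    by (subst sum.swap) (rule sum.cong[OF refl], rule sum.swap)
  also have "\<dots> = (\<Sum>l\<le>n. \<Sum>p\<le>n. \<Sum>i\<le>p. f i (p - i) l)"
    by (intro sum.cong refl sum_triangle_eq_sum_square[symmetric]) (simp add: f_def B0)
  also have "\<dots> = (\<Sum>l\<le>n. \<Sum>p\<le>n. if p = 0 then H p * B (p+l) l / fact l else 0)"
  proof (intro sum.cong refl)
    fix l p
    have "(\<Sum>i\<le>p. f i (p - i) l) = (\<Sum>i\<le>p. (-1)^i / (fact i * fact (p - i))) * (H p * B (p+l) l / fact l)"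
      unfolding sum_distrib_right by (intro sum.cong refl) (simp add: f_def field_simps)
    then show "(\<Sum>i\<le>p. f i (p - i) l) = (if p = 0 then H p * B (p+l) l / fact l else 0)"
      by (simp add: sum_alternating_inverse_fact)
  qed
  also have "\<dots> = H 0 * (\<Sum>l\<le>n. B l l / fact l)"
    by (simp add: sum_distrib_left)
  finally show ?thesis .
qed

section \<open>Expansion of the supersphere integral in moments\<close>

text \<open>\<open>r\<^sup>m\<^sup>-\<^sup>2 g\<^sub>E\<close> as a function on \<open>\<real>\<^sup>m\<close>, written through \<open>|x|\<^sup>2\<close> so that it is smooth off the origin.\<close>

definition radial_weight :: "(real^'m \<Rightarrow> grass) \<Rightarrow> nat set \<Rightarrow> real^'m \<Rightarrow> complex" where
  "radial_weight g E x = of_real ((x \<bullet> x) powr ((real CARD('m) - 2) / 2)) * g x E"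

definition berezin_moment :: "nat \<Rightarrow> (real^'m \<Rightarrow> grass) \<Rightarrow> nat \<Rightarrow> nat \<Rightarrow> real^'m \<Rightarrow> complex" where
  "berezin_moment n g N l \<xi> =
     berezin n (gmul (gpow (gsq n) N) (\<lambda>E. (radial_Dr2 ^^ l) (radial_weight g E) \<xi>))"

definition ssint_term :: "nat \<Rightarrow> (real^'m \<Rightarrow> grass) \<Rightarrow> nat \<Rightarrow> real^'m \<Rightarrow> complex" where
  "ssint_term n f j \<xi> = berezin n (gmul (\<lambda>A. gpow (gsq n) j A / of_nat (fact j))
     (\<lambda>A. (Dr2 ^^ j) (\<lambda>r. of_real (r powr (real CARD('m) - 2)) * f (r *\<^sub>R \<xi>) A) 1))"

lemma ssint_eq_sum_ssint_term:
  fixes f :: "real^'m \<Rightarrow> grass"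
  shows "ssint n f = (\<Sum>j\<le>n. sphere_int (ssint_term n f j))"
  by (simp add: ssint_def ssint_term_def[abs_def])

lemma radial_weight_scaleR:
  fixes \<xi> :: "real^'m"
  assumes "norm \<xi> = 1" "0 < r"
  shows "radial_weight g E (r *\<^sub>R \<xi>) = of_real (r powr (real CARD('m) - 2)) * g (r *\<^sub>R \<xi>) E"
proof -
  have "(r *\<^sub>R \<xi>) \<bullet> (r *\<^sub>R \<xi>) = r^2"
    using assms(1) by (simp add: power2_eq_square power2_norm_eq_inner[symmetric])
  moreover have "(r^2) powr (q / 2) = r powr q" for q
  proof -
    have "r^2 = r powr 2" using assms(2) powr_realpow[of r 2] by simp
    then have "(r^2) powr (q / 2) = r powr (2 * (q / 2))" by (simp add: powr_powr)
    then show ?thesis by simp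
  qed
  ultimately show ?thesis by (simp add: radial_weight_def)
qed

lemma berezin_moment_eq_0:
  assumes "n < N"
  shows "berezin_moment n g N l = (\<lambda>_. 0)"
proof
  fix \<xi>
  show "berezin_moment n g N l \<xi> = 0"
    unfolding berezin_moment_def
  proof (rule berezin_eq_0)
    fix E :: "nat set" assume "E \<subseteq> {1..2*n}"
    then have "card E < 2 * N" using assms card_mono[of "{1..2*n}" E] by simp
    then show "gmul (gpow (gsq n) N) (\<lambda>E. (radial_Dr2 ^^ l) (radial_weight g E) \<xi>) E = 0"
      using gmul_homogeneous_eq_0[OF homogeneous_gpow[OF homogeneous_gsq]] by simp
  qed
qed

lemma gmul_hR2_eq_sum:
  "gmul (hR2 n h x) f D = (\<Sum>i\<le>n. \<Sum>A\<in>Pow D.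
     of_real ((-1)^i / fact i * (deriv ^^ i) h ((norm x)\<^sup>2)) * gsign A (D - A) * gpow (gsq n) i A * f (D - A))"
  unfolding hR2_def gmul_sum_left gmul_mult_left by (simp add: gmul_def sum_distrib_left ac_simps)

context
  fixes g :: "real^'m \<Rightarrow> grass" and h :: "real \<Rightarrow> real" and n :: nat and V :: "(real^'m) set"
  assumes open_V: "open V" and zero_notin_V: "0 \<notin> V" and sphere_subset_V: "sphere 0 1 \<subseteq> V"
    and g_Ck: "\<And>E. E \<subseteq> {1..2*n} \<Longrightarrow> Ck_on n V (\<lambda>x. g x E)"
    and h_Cn: "Cn_real n {0<..} h"
begin

lemma Ck_on_radial_weight: "E \<subseteq> {1..2*n} \<Longrightarrow> Ck_on n V (radial_weight g E)"
  unfolding radial_weight_def[abs_def]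
  by (intro Ck_on_mult Ck_on_inner_self_powr open_V zero_notin_V g_Ck)

lemma continuous_on_berezin_moment:
  assumes "l \<le> n"
  shows "continuous_on (sphere 0 1) (berezin_moment n g N l)"
proof -
  have "continuous_on (sphere 0 1) (\<lambda>\<xi>. (radial_Dr2 ^^ l) (radial_weight g E) \<xi>)" if "E \<subseteq> {1..2*n}" for E
    using Ck_on_imp_continuous_on[OF Ck_on_radial_Dr2_pow[OF open_V zero_notin_V Ck_on_radial_weight[OF that] assms]]
      sphere_subset_V
    by (rule continuous_on_subset)
  then show ?thesis
    unfolding berezin_moment_def[abs_def] by (intro continuous_on_berezin continuous_on_gmul) (meson order_trans)
qed

lemma ssint_term_eq_berezin_moment:
  assumes \<xi>: "\<xi> \<in> sphere 0 1" and l: "l \<le> n"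
  shows "ssint_term n g l \<xi> = berezin_moment n g l l \<xi> / fact l"
proof -
  have radial: "(Dr2 ^^ l) (\<lambda>r. of_real (r powr (real CARD('m) - 2)) * g (r *\<^sub>R \<xi>) E) 1
                = (radial_Dr2 ^^ l) (radial_weight g E) (1 *\<^sub>R \<xi>)" if "E \<subseteq> {1..2*n}" for E
    by (rule Dr2_pow_radial[where N=n])
       (use \<xi> l sphere_subset_V Ck_on_radial_weight[OF that] in \<open>auto simp: open_V zero_notin_V radial_weight_scaleR\<close>)
  have "ssint_term n g l \<xi> = berezin n (gmul (gpow (gsq n) l)
          (\<lambda>A. (Dr2 ^^ l) (\<lambda>r. of_real (r powr (real CARD('m) - 2)) * g (r *\<^sub>R \<xi>) A) 1)) / fact l"
    by (simp add: ssint_term_def gmul_divide_left berezin_divide)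
  also have "berezin n (gmul (gpow (gsq n) l)
          (\<lambda>A. (Dr2 ^^ l) (\<lambda>r. of_real (r powr (real CARD('m) - 2)) * g (r *\<^sub>R \<xi>) A) 1))
      = berezin_moment n g l l \<xi>"
    unfolding berezin_moment_def using radial by (intro berezin_cong gmul_cong) auto
  finally show ?thesis .
qed

lemma differentiable_deriv_funpow:
  assumes "p + i < n" "0 < s"
  shows "(deriv ^^ p) ((deriv ^^ i) h) differentiable at s"
proof -
  have "(deriv ^^ p) ((deriv ^^ i) h) = (deriv ^^ (p + i)) h" by (simp add: funpow_add)
  then show ?thesis using h_Cn assms by (simp add: Cn_real_def)
qed

text \<open>The bound on \<open>card D\<close> restricts the expansion to the derivatives \<open>h\<^bsup>(p)\<^esup>\<close> with \<open>p < n\<close>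
  that the hypothesis on \<open>h\<close> provides; the other coefficients never reach the Berezin integral.\<close>

lemma Dr2_pow_gmul_hR2:
  assumes \<xi>: "\<xi> \<in> sphere 0 1" and j: "j \<le> n" and D: "D \<subseteq> {1..2*n}" "card D + 2*j \<le> 2*n"
  shows "(Dr2 ^^ j) (\<lambda>r. of_real (r powr (real CARD('m) - 2)) * gmul (hR2 n h (r *\<^sub>R \<xi>)) (g (r *\<^sub>R \<xi>)) D) 1
    = (\<Sum>i\<le>n. \<Sum>k\<le>j. of_nat (j choose k) * ((-1)^i / fact i * of_real ((deriv ^^ (k+i)) h 1))
         * gmul (gpow (gsq n) i) (\<lambda>E. (radial_Dr2 ^^ (j-k)) (radial_weight g E) \<xi>) D)"
proof -
  have fD: "finite D" using D(1) by (rule finite_subset) simp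
  have n\<xi>: "norm \<xi> = 1" using \<xi> by simp
  define a where "a t = of_real ((-1)^fst t / fact (fst t)) * gsign (snd t) (D - snd t) * gpow (gsq n) (fst t) (snd t)"
    for t :: "nat \<times> nat set"
  define W where "W i A k = a (i, A) * (of_nat (j choose k) * of_real ((deriv ^^ k) ((deriv ^^ i) h) 1)
                   * (radial_Dr2 ^^ (j-k)) (radial_weight g (D - A)) \<xi>)" for i A k
  have "(Dr2 ^^ j) (\<lambda>r. of_real (r powr (real CARD('m) - 2)) * gmul (hR2 n h (r *\<^sub>R \<xi>)) (g (r *\<^sub>R \<xi>)) D) 1
      = (\<Sum>t\<in>{..n} \<times> Pow D. a t * Leibniz_Dr2 j ((deriv ^^ fst t) h) (radial_weight g (D - snd t)) \<xi> 1)"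
  proof (rule Dr2_pow_Leibniz[where N=j and V=V])
    fix t assume "t \<in> {..n} \<times> Pow D"
    then show "Ck_on j V (radial_weight g (D - snd t))"
      using D(1) j by (intro Ck_on_le[OF Ck_on_radial_weight]) auto
  next
    fix t p and r :: real assume t: "t \<in> {..n} \<times> Pow D" and "a t \<noteq> 0" "p < j" "0 < r"
    then have "gpow (gsq n) (fst t) (snd t) \<noteq> 0" by (auto simp: a_def)
    then have "card (snd t) = 2 * fst t"
      using homogeneous_gpow[OF homogeneous_gsq] by (auto simp: homogeneous_def)
    moreover have "card (snd t) \<le> card D" using t fD by (auto intro: card_mono)
    ultimately have "p + fst t < n" using D(2) \<open>p < j\<close> by linarith
    then show "(deriv ^^ p) ((deriv ^^ fst t) h) differentiable at (r^2)"
      using \<open>0 < r\<close> by (simp add: differentiable_deriv_funpow)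
  next
    fix r :: real assume "0 < r"
    then show "of_real (r powr (real CARD('m) - 2)) * gmul (hR2 n h (r *\<^sub>R \<xi>)) (g (r *\<^sub>R \<xi>)) D
        = (\<Sum>t\<in>{..n} \<times> Pow D. a t * of_real ((deriv ^^ fst t) h (r^2)) * radial_weight g (D - snd t) (r *\<^sub>R \<xi>))"
      using n\<xi> by (simp add: gmul_hR2_eq_sum radial_weight_scaleR a_def sum.cartesian_product' sum_distrib_left ac_simps)
  qed (use n\<xi> fD \<xi> sphere_subset_V open_V zero_notin_V j in auto)
  also have "\<dots> = (\<Sum>i\<le>n. \<Sum>A\<in>Pow D. \<Sum>k\<le>j. W i A k)"
    by (simp add: sum.cartesian_product' Leibniz_Dr2_def W_def sum_distrib_left ac_simps)
  also have "\<dots> = (\<Sum>i\<le>n. \<Sum>k\<le>j. \<Sum>A\<in>Pow D. W i A k)"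
    by (intro sum.cong refl sum.swap)
  also have "\<dots> = (\<Sum>i\<le>n. \<Sum>k\<le>j. of_nat (j choose k) * ((-1)^i / fact i * of_real ((deriv ^^ (k+i)) h 1))
         * gmul (gpow (gsq n) i) (\<lambda>E. (radial_Dr2 ^^ (j-k)) (radial_weight g E) \<xi>) D)"
    unfolding funpow_add comp_apply by (simp add: W_def a_def gmul_def sum_distrib_left ac_simps)
  finally show ?thesis .
qed

lemma ssint_term_hR2_eq_berezin_moments:
  assumes \<xi>: "\<xi> \<in> sphere 0 1" and j: "j \<le> n"
  shows "ssint_term n (\<lambda>x. gmul (hR2 n h x) (g x)) j \<xi>
    = (\<Sum>i\<le>n. \<Sum>k\<le>j. of_nat (j choose k) * ((-1)^i / fact i * of_real ((deriv ^^ (k+i)) h 1)) / fact j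
         * berezin_moment n g (i+j) (j-k) \<xi>)"
proof -
  define F where "F D = (Dr2 ^^ j) (\<lambda>r. of_real (r powr (real CARD('m) - 2))
                           * gmul (hR2 n h (r *\<^sub>R \<xi>)) (g (r *\<^sub>R \<xi>)) D) 1" for D
  define G where "G i k = gmul (gpow (gsq n) i) (\<lambda>E. (radial_Dr2 ^^ (j-k)) (radial_weight g E) \<xi>)" for i k
  define c where "c i k = (of_nat (j choose k) * ((-1)^i / fact i * of_real ((deriv ^^ (k+i)) h 1)) :: complex)"
    for i k
  have "ssint_term n (\<lambda>x. gmul (hR2 n h x) (g x)) j \<xi> = berezin n (gmul (gpow (gsq n) j) F) / fact j"
    by (simp add: ssint_term_def F_def[abs_def] gmul_divide_left berezin_divide)
  also have "berezin n (gmul (gpow (gsq n) j) F)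
      = berezin n (gmul (gpow (gsq n) j) (\<lambda>D. \<Sum>i\<le>n. \<Sum>k\<le>j. c i k * G i k D))"
  proof (rule berezin_cong)
    fix C :: "nat set" assume C: "C \<subseteq> {1..2*n}"
    then have "finite C" "card C \<le> 2*n" using finite_subset card_mono[of "{1..2*n}" C] by auto
    then show "gmul (gpow (gsq n) j) F C = gmul (gpow (gsq n) j) (\<lambda>D. \<Sum>i\<le>n. \<Sum>k\<le>j. c i k * G i k D) C"
      using C by (intro gmul_homogeneous_cong[OF homogeneous_gpow[OF homogeneous_gsq]])
                 (auto simp: F_def G_def c_def Dr2_pow_gmul_hR2[OF \<xi> j])
  qed
  also have "\<dots> = (\<Sum>i\<le>n. \<Sum>k\<le>j. c i k * berezin_moment n g (i+j) (j-k) \<xi>)"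
    by (simp add: G_def gmul_sum_right gmul_mult_right berezin_sum berezin_mult_left gmul_gpow_gpow
                  berezin_moment_def add.commute)
  finally show ?thesis
    by (simp add: c_def sum_divide_distrib)
qed

lemma ssint_eq_berezin_moments:
  "ssint n g = (\<Sum>l\<le>n. sphere_int (berezin_moment n g l l) / fact l)"
  unfolding ssint_eq_sum_ssint_term
proof (intro sum.cong refl)
  fix l assume "l \<in> {..n}"
  then have "sphere_int (ssint_term n g l) = sphere_int (\<lambda>\<xi>. berezin_moment n g l l \<xi> / fact l)"
    by (intro sphere_int_cong ssint_term_eq_berezin_moment) auto
  then show "sphere_int (ssint_term n g l) = sphere_int (berezin_moment n g l l) / fact l"
    by (simp add: sphere_int_divide)
qed

lemma ssint_hR2_eq_berezin_moments:
  "ssint n (\<lambda>x. gmul (hR2 n h x) (g x)) =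
     (\<Sum>j\<le>n. \<Sum>i\<le>n. \<Sum>k\<le>j. of_nat (j choose k) * ((-1)^i / fact i * of_real ((deriv ^^ (k+i)) h 1)) / fact j
        * sphere_int (berezin_moment n g (i+j) (j-k)))"
  unfolding ssint_eq_sum_ssint_term
proof (intro sum.cong refl)
  fix j assume "j \<in> {..n}"
  then have j: "j \<le> n" by simp
  define c :: "nat \<Rightarrow> nat \<Rightarrow> complex"
    where "c i k = of_nat (j choose k) * ((-1)^i / fact i * of_real ((deriv ^^ (k+i)) h 1)) / fact j" for i k
  have cont: "continuous_on (sphere 0 1) (berezin_moment n g (i+j) (j-k))" for i k
    using j by (intro continuous_on_berezin_moment) simp
  have "sphere_int (ssint_term n (\<lambda>x. gmul (hR2 n h x) (g x)) j)
      = sphere_int (\<lambda>\<xi>. \<Sum>i\<le>n. \<Sum>k\<le>j. c i k * berezin_moment n g (i+j) (j-k) \<xi>)"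
    unfolding c_def using j by (intro sphere_int_cong ssint_term_hR2_eq_berezin_moments)
  also have "\<dots> = (\<Sum>i\<le>n. \<Sum>k\<le>j. c i k * sphere_int (berezin_moment n g (i+j) (j-k)))"
    using cont by (simp add: sphere_int_sum continuous_intros sphere_int_mult_left)
  finally show "sphere_int (ssint_term n (\<lambda>x. gmul (hR2 n h x) (g x)) j)
      = (\<Sum>i\<le>n. \<Sum>k\<le>j. of_nat (j choose k) * ((-1)^i / fact i * of_real ((deriv ^^ (k+i)) h 1)) / fact j
           * sphere_int (berezin_moment n g (i+j) (j-k)))"
    by (simp only: c_def)
qed

end

theorem lemma12:
  fixes g :: "real^'m \<Rightarrow> nat set \<Rightarrow> complex"
    and h :: "real \<Rightarrow> real" and n :: nat and U :: "(real^'m) set"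
  assumes "open U" and "sphere 0 1 \<subseteq> U"
    and "\<forall>A. A \<subseteq> {1..2*n} \<longrightarrow> Ck_on n U (\<lambda>x. g x A)"
    and "Cn_real n {0<..} h"
  shows "ssint n (\<lambda>x. gmul (hR2 n h x) (g x)) = of_real (h 1) * ssint n g"
proof -
  define V where "V = U - {0}"
  have V: "open V" "0 \<notin> V" "sphere 0 1 \<subseteq> V"
    using assms(1,2) by (auto simp: V_def open_Diff)
  have g_Ck: "Ck_on n V (\<lambda>x. g x E)" if "E \<subseteq> {1..2*n}" for E
    using assms(3) that by (auto simp: V_def intro: Ck_on_subset)
  have g_moments: "ssint n g = (\<Sum>l\<le>n. sphere_int (berezin_moment n g l l) / fact l)"
    by (rule ssint_eq_berezin_moments[where g=g, OF V g_Ck assms(4)])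
  have "ssint n (\<lambda>x. gmul (hR2 n h x) (g x)) =
     (\<Sum>j\<le>n. \<Sum>i\<le>n. \<Sum>k\<le>j. of_nat (j choose k) * ((-1)^i / fact i * of_real ((deriv ^^ (k+i)) h 1)) / fact j
        * sphere_int (berezin_moment n g (i+j) (j-k)))"
    by (rule ssint_hR2_eq_berezin_moments[where g=g, OF V g_Ck assms(4)])
  also have "\<dots> = of_real ((deriv ^^ 0) h 1) * (\<Sum>l\<le>n. sphere_int (berezin_moment n g l l) / fact l)"
    by (rule sum_binomial_Taylor_cancel[where H="\<lambda>p. of_real ((deriv ^^ p) h 1)"
                                         and B="\<lambda>N l. sphere_int (berezin_moment n g N l)"])
       (simp add: berezin_moment_eq_0 sphere_int_def)
  also have "\<dots> = of_real (h 1) * ssint n g"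
    by (simp add: g_moments)
  finally show ?thesis .
qed

end
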